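(* Let $k$ be a difference field of characteristic $0$, $R=k\{y_1,\ldots,y_n\}$, and $I$ a monomial $\sigma$-ideal of $R$ with support set $S=\{\mathbf{u}\in\mathbb{N}[x]^n:\mathbf{y}^{\mathbf{u}}\in I\}$. Then $\langle I\rangle_r=k[\sqrt{\langle S\rangle}]$.
   Context: A difference field is a field $k$ with a ring endomorphism $\sigma$; $R=k\{y_1,\ldots,y_n\}$ is the polynomial ring over $k$ in the variables $\sigma^j(y_i)$, with $\sigma$ extended naturally. For $p=\sum_ic_ix^i\in\mathbb{N}[x]$ and $a\in R$, $a^p=\prod_i(\sigma^i(a))^{c_i}$; $\mathbf{y}^{\mathbf{u}}=y_1^{u_1}\cdots y_n^{u_n}$. A $\sigma$-ideal is an ideal stable under $\sigma$; monomial if generated by monomials; well-mixed if $ab\in I\Rightarrow a\sigma(b)\in I$. $\langle I\rangle_r$ is the smallest radical well-mixed $\sigma$-ideal containing $I$. For $T\subseteq\mathbb{N}[x]^n$: $k[T]=\bigoplus_{\mathbf{u}\in T}k\mathbf{y}^{\mathbf{u}}$; $[T]=\{g\mathbf{u}+\mathbf{t}:\mathbf{u}\in T,\ g\in\mathbb{N}[x]\setminus\{0\},\ \mathbf{t}\in\mathbb{N}[x]^n\}$; $\sqrt{T}=\{\mathbf{u}\in\mathbb{N}[x]^n:m\mathbf{u}\in[T]\text{ for some }m\in\mathbb{N}\setminus\{0\}\}$; $T'=\{\mathbf{u}+x\mathbf{v}:\mathbf{u},\mathbf{v}\in\mathbb{N}[x]^n,\ \mathbf{u}+\mathbf{v}\in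 T\}$; $S^{[0]}=S$, $S^{[j]}=[S^{[j-1]}]'$ for $j\ge1$; $\langle S\rangle=\bigcup_{j\ge0}S^{[j]}$. *)

theory Defs
  imports "HOL-Library.Poly_Mapping" "HOL-Computational_Algebra.Polynomial"
begin

(* Difference polynomial ring R = k{y_i : i in 'n}.  The variable sigma^j(y_i) is (i,j). *)
type_synonym 'n dmono = "('n \<times> nat) \<Rightarrow>\<^sub>0 nat"
type_synonym ('n,'k) dpoly = "'n dmono \<Rightarrow>\<^sub>0 'k"

definition ring_endo :: "('k::field \<Rightarrow> 'k) \<Rightarrow> bool" where
  "ring_endo \<sigma> \<longleftrightarrow> \<sigma> 1 = 1 \<and> (\<forall>a b. \<sigma> (a + b) = \<sigma> a + \<sigma> b) \<and> (\<forall>a b. \<sigma> (a * b) = \<sigma> a * \<sigma> b)"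

definition shift_mono :: "'n dmono \<Rightarrow> 'n dmono" where
  "shift_mono m = (\<Sum>v\<in>Poly_Mapping.keys m. Poly_Mapping.single (fst v, Suc (snd v)) (Poly_Mapping.lookup m v))"

definition sigmaR :: "('k::field \<Rightarrow> 'k) \<Rightarrow> ('n,'k) dpoly \<Rightarrow> ('n,'k) dpoly" where
  "sigmaR \<sigma> p = (\<Sum>m\<in>Poly_Mapping.keys p. Poly_Mapping.single (shift_mono m) (\<sigma> (Poly_Mapping.lookup p m)))"

definition is_ideal :: "('n,'k::field) dpoly set \<Rightarrow> bool" where
  "is_ideal I \<longleftrightarrow> 0 \<in> I \<and> (\<forall>a\<in>I. \<forall>b\<in>I. a + b \<in> I) \<and> (\<forall>r. \<forall>a\<in>I. r * a \<in> I)"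

definition ideal_gen :: "('n,'k::field) dpoly set \<Rightarrow> ('n,'k) dpoly set" where
  "ideal_gen G = \<Inter>{J. is_ideal J \<and> G \<subseteq> J}"

definition sigma_ideal :: "('k::field \<Rightarrow> 'k) \<Rightarrow> ('n,'k) dpoly set \<Rightarrow> bool" where
  "sigma_ideal \<sigma> I \<longleftrightarrow> is_ideal I \<and> (\<forall>a\<in>I. sigmaR \<sigma> a \<in> I)"

definition monomial_ideal :: "('n,'k::field) dpoly set \<Rightarrow> bool" where
  "monomial_ideal I \<longleftrightarrow> (\<exists>M. I = ideal_gen ((\<lambda>m. Poly_Mapping.single m 1) ` M))"

definition well_mixed :: "('k::field \<Rightarrow> 'k) \<Rightarrow> ('n,'k) dpoly set \<Rightarrow> bool" where
  "well_mixed \<sigma> I \<longleftrightarrow> (\<forall>a b. a * b \<in> I \<longrightarrow> a * sigmaR \<sigma> b \<in> I)"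

definition radical :: "('n,'k::field) dpoly set \<Rightarrow> bool" where
  "radical I \<longleftrightarrow> (\<forall>a m. m > 0 \<and> a ^ m \<in> I \<longrightarrow> a \<in> I)"

definition rwm_closure :: "('k::field \<Rightarrow> 'k) \<Rightarrow> ('n,'k) dpoly set \<Rightarrow> ('n,'k) dpoly set" where
  "rwm_closure \<sigma> I = \<Inter>{J. sigma_ideal \<sigma> J \<and> well_mixed \<sigma> J \<and> radical J \<and> I \<subseteq> J}"

definition mono_of :: "('n::finite \<Rightarrow> nat poly) \<Rightarrow> 'n dmono" where
  "mono_of u = (\<Sum>i\<in>UNIV. \<Sum>j\<le>degree (u i). Poly_Mapping.single (i, j) (coeff (u i) j))"

definition kspan :: "('n::finite \<Rightarrow> nat poly) set \<Rightarrow> ('n,'k::field) dpoly set" where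
  "kspan T = {p. Poly_Mapping.keys p \<subseteq> mono_of ` T}"

definition supp_set :: "('n::finite,'k::field) dpoly set \<Rightarrow> ('n \<Rightarrow> nat poly) set" where
  "supp_set I = {u. Poly_Mapping.single (mono_of u) 1 \<in> I}"

definition brk :: "('n \<Rightarrow> nat poly) set \<Rightarrow> ('n \<Rightarrow> nat poly) set" where
  "brk T = {(\<lambda>i. g * u i + t i) | g u t. u \<in> T \<and> g \<noteq> 0}"

definition nsqrt :: "('n \<Rightarrow> nat poly) set \<Rightarrow> ('n \<Rightarrow> nat poly) set" where
  "nsqrt T = {u. \<exists>m::nat. m > 0 \<and> (\<lambda>i. of_nat m * u i) \<in> brk T}"

definition nprime :: "('n \<Rightarrow> nat poly) set \<Rightarrow> ('n \<Rightarrow> nat poly) set" where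
  "nprime T = {(\<lambda>i. u i + [:0, 1:] * v i) | u v. (\<lambda>i. u i + v i) \<in> T}"

definition Siter :: "('n \<Rightarrow> nat poly) set \<Rightarrow> nat \<Rightarrow> ('n \<Rightarrow> nat poly) set" where
  "Siter S j = ((\<lambda>T. nprime (brk T)) ^^ j) S"

definition angle :: "('n \<Rightarrow> nat poly) set \<Rightarrow> ('n \<Rightarrow> nat poly) set" where
  "angle S = (\<Union>j. Siter S j)"

end

theory Submission
  imports Defs "HOL-Library.Countable"
begin

text \<open>Everything is decided on monomials \<open>y^u\<close>. Let \<open>M\<close> be the set of monomials with exponent in
  \<open>\<surd>\<langle>S\<rangle>\<close>. A radical well-mixed \<open>\<sigma>\<close>-ideal containing \<open>I\<close> is closed under applying \<open>\<sigma>\<close> and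
  multiplying by monomials (which produces \<open>[T]\<close>), under \<open>y^(u + v) \<mapsto> y^(u + x v)\<close> (which produces \<open>T'\<close>) and
  under roots, so it contains \<open>M\<close> and hence \<open>k[M]\<close>. Conversely \<open>k[M]\<close> is the intersection of the
  ideals generated by those sets \<open>V\<close> of variables that are closed under \<open>\<sigma>\<close> and meet every monomial
  of \<open>M\<close>; each of them is prime and \<open>\<sigma>\<close>-stable, hence radical and well-mixed.\<close>

section \<open>Finitely supported maps and polynomial rings as domains\<close>

lemma poly_mapping_le_imp_add_diff:
  "(\<And>q. Poly_Mapping.lookup a q \<le> Poly_Mapping.lookup b q) \<Longrightarrow> b = a + (b - (a :: 'a \<Rightarrow>\<^sub>0 nat))"
  by (rule poly_mapping_eqI) (simp add: lookup_add lookup_minus)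

lemma poly_mapping_sum_single:
  "p = (\<Sum>k\<in>Poly_Mapping.keys p. Poly_Mapping.single k (Poly_Mapping.lookup p k))"
  by (rule poly_mapping_eqI) (simp add: lookup_sum lookup_single when_def in_keys_iff)

lemma keys_add_nat: "Poly_Mapping.keys (x + (y :: 'a \<Rightarrow>\<^sub>0 nat)) = Poly_Mapping.keys x \<union> Poly_Mapping.keys y"
  by (auto simp: in_keys_iff lookup_add)

lemma single_one_power:
  "Poly_Mapping.single a (1 :: 'k::comm_semiring_1) ^ n = Poly_Mapping.single (\<Sum>k<n. a) 1"
  by (induction n) (simp_all add: mult_single add.commute)

definition remap_keys :: "('a \<Rightarrow> 'b) \<Rightarrow> ('a \<Rightarrow>\<^sub>0 'c::comm_monoid_add) \<Rightarrow> 'b \<Rightarrow>\<^sub>0 'c" where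
  "remap_keys f p = (\<Sum>k\<in>Poly_Mapping.keys p. Poly_Mapping.single (f k) (Poly_Mapping.lookup p k))"

lemma remap_keys_add: "remap_keys f (p + q) = remap_keys f p + remap_keys f q"
  unfolding remap_keys_def by (rule setsum_keys_plus_distrib) (simp_all add: single_add)

lemma remap_keys_zero [simp]: "remap_keys f 0 = 0"
  by (simp add: remap_keys_def)

lemma remap_keys_single: "remap_keys f (Poly_Mapping.single k c) = Poly_Mapping.single (f k) c"
  by (simp add: remap_keys_def)

lemma remap_keys_sum: "remap_keys f (sum g A) = (\<Sum>x\<in>A. remap_keys f (g x))"
  by (induction A rule: infinite_finite_induct) (simp_all add: remap_keys_add)

lemma lookup_remap_keys:
  assumes "inj f"
  shows "Poly_Mapping.lookup (remap_keys f p) (f k) = Poly_Mapping.lookup p k"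
proof -
  have "Poly_Mapping.lookup (remap_keys f p) (f k) =
      (\<Sum>k'\<in>Poly_Mapping.keys p. (Poly_Mapping.lookup p k' when k' = k))"
    unfolding remap_keys_def lookup_sum lookup_single
    by (rule sum.cong) (auto simp: when_def inj_eq[OF assms])
  then show ?thesis
    by (simp add: when_def in_keys_iff)
qed

lemma inj_remap_keys: "inj f \<Longrightarrow> inj (remap_keys f)"
  by (rule injI, rule poly_mapping_eqI) (metis lookup_remap_keys)

lemma remap_keys_mult:
  fixes p q :: "'a::monoid_add \<Rightarrow>\<^sub>0 'c::semiring_0"
  assumes "\<And>x y. f (x + y) = f x + f y"
  shows "remap_keys f (p * q) = remap_keys f p * remap_keys f q"
proof -
  let ?A = "Poly_Mapping.keys p" and ?B = "Poly_Mapping.keys q"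
  let ?c = "\<lambda>x y. Poly_Mapping.lookup p x * Poly_Mapping.lookup q y"
  have "p * q = (\<Sum>x\<in>?A. Poly_Mapping.single x (Poly_Mapping.lookup p x)) *
      (\<Sum>y\<in>?B. Poly_Mapping.single y (Poly_Mapping.lookup q y))"
    by (simp flip: poly_mapping_sum_single)
  then have pq: "p * q = (\<Sum>x\<in>?A. \<Sum>y\<in>?B. Poly_Mapping.single (x + y) (?c x y))"
    by (simp add: sum_product mult_single)
  have "remap_keys f p * remap_keys f q =
      (\<Sum>x\<in>?A. Poly_Mapping.single (f x) (Poly_Mapping.lookup p x)) *
      (\<Sum>y\<in>?B. Poly_Mapping.single (f y) (Poly_Mapping.lookup q y))"
    by (simp add: remap_keys_def)
  also have "\<dots> = (\<Sum>x\<in>?A. \<Sum>y\<in>?B. Poly_Mapping.single (f x + f y) (?c x y))"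
    by (simp add: sum_product mult_single)
  also have "\<dots> = remap_keys f (p * q)"
    unfolding pq by (simp add: remap_keys_sum remap_keys_single assms)
  finally show ?thesis ..
qed

text \<open>The library has no zero divisors only for linearly ordered variables, so the countably many
  variables are first renamed into \<open>nat\<close>.\<close>

lemma mult_eq_0_countable_vars:
  fixes p q :: "('v::countable \<Rightarrow>\<^sub>0 nat) \<Rightarrow>\<^sub>0 'k::semiring_no_zero_divisors"
  assumes "p * q = 0"
  shows "p = 0 \<or> q = 0"
proof -
  let ?e = "remap_keys (to_nat :: 'v \<Rightarrow> nat)"
  have inj: "inj (remap_keys ?e)"
    by (intro inj_remap_keys inj_remap_keys inj_to_nat)
  have "remap_keys ?e p * remap_keys ?e q = remap_keys ?e (p * q)"
    by (rule remap_keys_mult[symmetric]) (rule remap_keys_add)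
  then have "remap_keys ?e p = 0 \<or> remap_keys ?e q = 0"
    using assms by simp
  then show ?thesis
    using injD[OF inj] by (metis remap_keys_zero)
qed

section \<open>Ideals generated by sets of variables\<close>

definition vars_ideal :: "'v set \<Rightarrow> (('v \<Rightarrow>\<^sub>0 nat) \<Rightarrow>\<^sub>0 'k::zero) set" where
  "vars_ideal V = {p. \<forall>w\<in>Poly_Mapping.keys p. Poly_Mapping.keys w \<inter> V \<noteq> {}}"

definition vars_free_part :: "'v set \<Rightarrow> (('v \<Rightarrow>\<^sub>0 nat) \<Rightarrow>\<^sub>0 'k::zero) \<Rightarrow> ('v \<Rightarrow>\<^sub>0 nat) \<Rightarrow>\<^sub>0 'k" where
  "vars_free_part V p =
    Abs_poly_mapping (\<lambda>w. if Poly_Mapping.keys w \<inter> V = {} then Poly_Mapping.lookup p w else 0)"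

lemma lookup_vars_free_part:
  "Poly_Mapping.lookup (vars_free_part V p) w =
    (if Poly_Mapping.keys w \<inter> V = {} then Poly_Mapping.lookup p w else 0)"
proof -
  have "finite {w. (if Poly_Mapping.keys w \<inter> V = {} then Poly_Mapping.lookup p w else 0) \<noteq> 0}"
    by (rule finite_subset[of _ "Poly_Mapping.keys p"]) (auto simp: in_keys_iff)
  then show ?thesis
    unfolding vars_free_part_def by simp
qed

lemma keys_vars_free_part:
  "w \<in> Poly_Mapping.keys (vars_free_part V p) \<Longrightarrow> Poly_Mapping.keys w \<inter> V = {}"
  by (auto simp: in_keys_iff lookup_vars_free_part split: if_splits)

lemma diff_vars_free_part_in_vars_ideal:
  "p - vars_free_part V (p :: ('v \<Rightarrow>\<^sub>0 nat) \<Rightarrow>\<^sub>0 'k::ab_group_add) \<in> vars_ideal V"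
  unfolding vars_ideal_def by (auto simp: in_keys_iff lookup_minus lookup_vars_free_part)

lemma vars_ideal_add:
  "a \<in> vars_ideal V \<Longrightarrow> b \<in> vars_ideal V \<Longrightarrow> a + b \<in> vars_ideal V"
  unfolding vars_ideal_def using keys_add[of a b] by blast

lemma vars_ideal_diff:
  fixes a b :: "('v \<Rightarrow>\<^sub>0 nat) \<Rightarrow>\<^sub>0 'k::ab_group_add"
  shows "a \<in> vars_ideal V \<Longrightarrow> b \<in> vars_ideal V \<Longrightarrow> a - b \<in> vars_ideal V"
  unfolding vars_ideal_def by (auto simp: in_keys_iff lookup_minus)

lemma vars_ideal_mult:
  fixes b :: "('v \<Rightarrow>\<^sub>0 nat) \<Rightarrow>\<^sub>0 'k::semiring_0"
  assumes "b \<in> vars_ideal V"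
  shows "r * b \<in> vars_ideal V"
  unfolding vars_ideal_def
proof (intro CollectI ballI)
  fix w assume "w \<in> Poly_Mapping.keys (r * b)"
  then obtain x y where "w = x + y" "y \<in> Poly_Mapping.keys b"
    using keys_mult by blast
  then show "Poly_Mapping.keys w \<inter> V \<noteq> {}"
    using assms unfolding vars_ideal_def by (auto simp: keys_add_nat)
qed

text \<open>\<open>vars_ideal V\<close> is the kernel of setting the variables in \<open>V\<close> to zero, a ring map onto a
  polynomial ring in the remaining variables.\<close>

lemma vars_ideal_prime:
  fixes a b :: "('v::countable \<Rightarrow>\<^sub>0 nat) \<Rightarrow>\<^sub>0 'k::idom"
  assumes "a * b \<in> vars_ideal V"
  shows "a \<in> vars_ideal V \<or> b \<in> vars_ideal V"
proof -
  let ?a = "vars_free_part V a" and ?b = "vars_free_part V b"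
  have "?a * (b - ?b) + b * (a - ?a) \<in> vars_ideal V"
    by (intro vars_ideal_add vars_ideal_mult diff_vars_free_part_in_vars_ideal)
  then have "a * b - (?a * (b - ?b) + b * (a - ?a)) \<in> vars_ideal V"
    using assms by (rule vars_ideal_diff[rotated])
  moreover have "a * b - (?a * (b - ?b) + b * (a - ?a)) = ?a * ?b"
    by (simp add: algebra_simps)
  ultimately have in_ideal: "?a * ?b \<in> vars_ideal V"
    by simp
  have "Poly_Mapping.keys (?a * ?b) = {}"
  proof (rule ccontr)
    assume "Poly_Mapping.keys (?a * ?b) \<noteq> {}"
    then obtain x y where "x + y \<in> Poly_Mapping.keys (?a * ?b)"
      "x \<in> Poly_Mapping.keys ?a" "y \<in> Poly_Mapping.keys ?b"
      using keys_mult by blast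
    then show False
      using in_ideal keys_vars_free_part unfolding vars_ideal_def by (fastforce simp: keys_add_nat)
  qed
  then have "?a = 0 \<or> ?b = 0"
    by (intro mult_eq_0_countable_vars) simp
  then show ?thesis
    using diff_vars_free_part_in_vars_ideal[of a V] diff_vars_free_part_in_vars_ideal[of b V] by auto
qed

lemma vars_ideal_power:
  fixes a :: "('v::countable \<Rightarrow>\<^sub>0 nat) \<Rightarrow>\<^sub>0 'k::idom"
  shows "m > 0 \<Longrightarrow> a ^ m \<in> vars_ideal V \<Longrightarrow> a \<in> vars_ideal V"
proof (induction m)
  case (Suc m)
  then show ?case
    by (cases m) (auto dest: vars_ideal_prime)
qed simp

lemma lookup_mono_of: "Poly_Mapping.lookup (mono_of u) (i, j) = coeff (u i) j"
proof -
  have "Poly_Mapping.lookup (mono_of u) (i, j) =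
    (\<Sum>i'\<in>UNIV. \<Sum>j'\<le>degree (u i'). (coeff (u i') j' when (i', j') = (i, j)))"
    by (simp add: mono_of_def lookup_sum lookup_single)
  also have "\<dots> = (\<Sum>i'\<in>UNIV. if i' = i then (\<Sum>j'\<le>degree (u i). (coeff (u i) j' when j' = j)) else 0)"
    by (rule sum.cong) (auto simp: when_def)
  also have "\<dots> = coeff (u i) j"
    by (simp add: when_def coeff_eq_0 not_le)
  finally show ?thesis .
qed

lemma lookup_shift_mono:
  "Poly_Mapping.lookup (shift_mono m) (i, j) = (case j of 0 \<Rightarrow> 0 | Suc j' \<Rightarrow> Poly_Mapping.lookup m (i, j'))"
proof (cases j)
  case 0
  then show ?thesis by (simp add: shift_mono_def lookup_sum lookup_single when_def)
next
  case (Suc j')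
  have "Poly_Mapping.lookup (shift_mono m) (i, j) =
      (\<Sum>v\<in>Poly_Mapping.keys m. (Poly_Mapping.lookup m v when v = (i, j')))"
    unfolding shift_mono_def lookup_sum lookup_single Suc
    by (rule sum.cong) (auto simp: when_def)
  also have "\<dots> = Poly_Mapping.lookup m (i, j')"
    by (simp add: when_def in_keys_iff)
  finally show ?thesis using Suc by simp
qed

lemma shift_mono_single: "shift_mono (Poly_Mapping.single (i, j) c) = Poly_Mapping.single (i, Suc j) c"
proof (rule poly_mapping_eqI)
  fix k :: "'a \<times> nat"
  show "Poly_Mapping.lookup (shift_mono (Poly_Mapping.single (i, j) c)) k =
      Poly_Mapping.lookup (Poly_Mapping.single (i, Suc j) c) k"
    by (cases k; cases "snd k") (simp_all add: lookup_shift_mono lookup_single)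
qed

lemma lookup_shift_mono_funpow:
  "Poly_Mapping.lookup ((shift_mono ^^ k) m) (i, j) = (if k \<le> j then Poly_Mapping.lookup m (i, j - k) else 0)"
  by (induction k arbitrary: j) (auto simp: lookup_shift_mono split: nat.split)

lemma mono_of_eqI:
  assumes "\<And>i j. Poly_Mapping.lookup w (i, j) = coeff (u i) j"
  shows "mono_of u = w"
  by (rule poly_mapping_eqI) (auto simp: lookup_mono_of assms)

lemma inj_mono_of: "inj mono_of"
proof (rule injI, rule ext, rule poly_eqI)
  fix u v :: "'n::finite \<Rightarrow> nat poly" and i j
  assume "mono_of u = mono_of v"
  then show "coeff (u i) j = coeff (v i) j"
    by (metis lookup_mono_of)
qed

lemma surj_mono_of: "surj mono_of"
proof (rule surjI)
  fix w :: "'n::finite dmono"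
  have "finite {j. Poly_Mapping.lookup w (i, j) \<noteq> 0}" for i
    by (rule finite_subset[of _ "snd ` Poly_Mapping.keys w"]) (force simp: in_keys_iff)+
  then have "coeff (Abs_poly (\<lambda>j. Poly_Mapping.lookup w (i, j))) j = Poly_Mapping.lookup w (i, j)" for i j
    by (subst Abs_poly_inverse) (simp_all add: MOST_iff_cofinite)
  then show "mono_of (\<lambda>i. Abs_poly (\<lambda>j. Poly_Mapping.lookup w (i, j))) = w"
    by (intro mono_of_eqI) simp
qed

lemma mono_of_add: "mono_of (\<lambda>i. u i + v i) = mono_of u + mono_of v"
  by (rule mono_of_eqI) (simp add: lookup_add lookup_mono_of)

lemma mono_of_add_xmult: "mono_of (\<lambda>i. u i + [:0, 1:] * v i) = mono_of u + shift_mono (mono_of v)"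
  by (rule mono_of_eqI) (simp add: lookup_add lookup_mono_of lookup_shift_mono coeff_pCons split: nat.split)

lemma lookup_mono_of_nat_mult:
  "Poly_Mapping.lookup (mono_of (\<lambda>i. of_nat n * u i)) q = n * Poly_Mapping.lookup (mono_of u) q"
  by (cases q) (simp add: lookup_mono_of of_nat_poly)

section \<open>The closure \<open>\<langle>S\<rangle>\<close> and its radical\<close>

lemma brkI: "u \<in> T \<Longrightarrow> g \<noteq> 0 \<Longrightarrow> (\<lambda>i. g * u i + t i) \<in> brk T"
  unfolding brk_def by blast

lemma nprimeI: "(\<lambda>i. u i + v i) \<in> T \<Longrightarrow> (\<lambda>i. u i + [:0, 1:] * v i) \<in> nprime T"
  unfolding nprime_def by blast

lemma subset_brk: "T \<subseteq> brk T"
proof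
  fix u assume "u \<in> T"
  then have "(\<lambda>i. 1 * u i + 0) \<in> brk T"
    by (rule brkI) simp
  then show "u \<in> brk T" by simp
qed

lemma subset_nprime: "T \<subseteq> nprime T"
proof
  fix u assume "u \<in> T"
  then have "(\<lambda>i. u i + [:0, 1:] * 0) \<in> nprime T"
    by (intro nprimeI) simp
  then show "u \<in> nprime T" by simp
qed

lemma brk_mono: "A \<subseteq> B \<Longrightarrow> brk A \<subseteq> brk B"
  unfolding brk_def by blast

lemma nprime_mono: "A \<subseteq> B \<Longrightarrow> nprime A \<subseteq> nprime B"
  unfolding nprime_def by blast

lemma Siter_Suc: "Siter S (Suc j) = nprime (brk (Siter S j))"
  by (simp add: Siter_def)

lemma subset_angle: "S \<subseteq> angle S"
  unfolding angle_def Siter_def by (auto intro: UN_I[of 0])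

lemma brk_angle_subset: "brk (angle S) \<subseteq> angle S"
proof
  fix x assume "x \<in> brk (angle S)"
  then obtain j where "x \<in> brk (Siter S j)"
    unfolding brk_def angle_def by blast
  then have "x \<in> Siter S (Suc j)"
    using subset_nprime by (auto simp: Siter_Suc)
  then show "x \<in> angle S"
    unfolding angle_def by blast
qed

lemma nprime_angle_subset: "nprime (angle S) \<subseteq> angle S"
proof
  fix x assume "x \<in> nprime (angle S)"
  then obtain j where "x \<in> nprime (Siter S j)"
    unfolding nprime_def angle_def by blast
  then have "x \<in> Siter S (Suc j)"
    using nprime_mono[OF subset_brk] by (auto simp: Siter_Suc)
  then show "x \<in> angle S"
    unfolding angle_def by blast
qed

lemma angle_least:
  assumes "S \<subseteq> T" "brk T \<subseteq> T" "nprime T \<subseteq> T"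
  shows "angle S \<subseteq> T"
proof -
  have "Siter S j \<subseteq> T" for j
  proof (induction j)
    case 0
    show ?case using assms(1) by (simp add: Siter_def)
  next
    case (Suc j)
    then have "nprime (brk (Siter S j)) \<subseteq> nprime (brk T)"
      by (intro nprime_mono brk_mono)
    also have "\<dots> \<subseteq> T"
      using assms(2,3) nprime_mono by blast
    finally show ?case by (simp add: Siter_Suc)
  qed
  then show ?thesis
    unfolding angle_def by blast
qed

lemma subset_nsqrt: "T \<subseteq> nsqrt T"
proof
  fix u assume "u \<in> T"
  then have "(\<lambda>i. of_nat 1 * u i) \<in> brk T"
    using subset_brk by auto
  then show "u \<in> nsqrt T"
    unfolding nsqrt_def by blast
qed

lemma nsqrt_mono: "A \<subseteq> B \<Longrightarrow> nsqrt A \<subseteq> nsqrt B"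
  unfolding nsqrt_def using brk_mono by blast

lemma nsqrt_add:
  assumes "u \<in> nsqrt T"
  shows "(\<lambda>i. u i + t i) \<in> nsqrt T"
proof -
  obtain m :: nat and g w t0 where m: "m > 0" and w: "w \<in> T" "g \<noteq> 0"
    and eq: "(\<lambda>i. of_nat m * u i) = (\<lambda>i. g * w i + t0 i)"
    using assms unfolding nsqrt_def brk_def by blast
  have "(\<lambda>i. of_nat m * (u i + t i)) = (\<lambda>i. g * w i + (t0 i + of_nat m * t i))"
  proof
    fix i
    show "of_nat m * (u i + t i) = g * w i + (t0 i + of_nat m * t i)"
      using fun_cong[OF eq, of i] by (simp add: algebra_simps)
  qed
  also have "\<dots> \<in> brk T"
    using w by (rule brkI)
  finally show ?thesis
    unfolding nsqrt_def using m by blast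
qed

lemma nsqrt_root:
  assumes "m > 0" "(\<lambda>i. of_nat m * u i) \<in> nsqrt T"
  shows "u \<in> nsqrt T"
proof -
  obtain m' :: nat where "m' > 0" "(\<lambda>i. of_nat m' * (of_nat m * u i)) \<in> brk T"
    using assms(2) unfolding nsqrt_def by blast
  then show ?thesis
    unfolding nsqrt_def using assms(1) by (intro CollectI exI[of _ "m' * m"]) (simp add: mult.assoc)
qed

lemma nsqrt_nprime:
  assumes "brk T \<subseteq> T" "nprime T \<subseteq> T" "(\<lambda>i. u i + v i) \<in> nsqrt T"
  shows "(\<lambda>i. u i + [:0, 1:] * v i) \<in> nsqrt T"
proof -
  obtain m :: nat where m: "m > 0" "(\<lambda>i. of_nat m * (u i + v i)) \<in> brk T"
    using assms(3) unfolding nsqrt_def by blast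
  then have "(\<lambda>i. of_nat m * u i + of_nat m * v i) \<in> T"
    using assms(1) by (simp add: distrib_left subset_iff)
  then have "(\<lambda>i. of_nat m * u i + [:0, 1:] * (of_nat m * v i)) \<in> nprime T"
    by (rule nprimeI)
  also have "(\<lambda>i. of_nat m * u i + [:0, 1:] * (of_nat m * v i)) = (\<lambda>i. of_nat m * (u i + [:0, 1:] * v i))"
    by (simp add: algebra_simps)
  finally have "(\<lambda>i. of_nat m * (u i + [:0, 1:] * v i)) \<in> brk T"
    using assms(2) subset_brk by blast
  then show ?thesis
    unfolding nsqrt_def using m(1) by blast
qed

lemma nsqrt_least:
  assumes "brk T \<subseteq> T" "\<And>m u. m > 0 \<Longrightarrow> (\<lambda>i. of_nat m * u i) \<in> T \<Longrightarrow> u \<in> T"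
  shows "nsqrt T \<subseteq> T"
  using assms unfolding nsqrt_def by blast

definition rad_monos :: "('n::finite \<Rightarrow> nat poly) set \<Rightarrow> 'n dmono set" where
  "rad_monos S = mono_of ` nsqrt (angle S)"

lemma mono_of_in_rad_monos_iff: "mono_of u \<in> rad_monos S \<longleftrightarrow> u \<in> nsqrt (angle S)"
  unfolding rad_monos_def by (rule inj_image_mem_iff[OF inj_mono_of])

lemma rad_monos_add:
  assumes "w \<in> rad_monos S"
  shows "w + d \<in> rad_monos S"
proof -
  obtain u v where "w = mono_of u" "d = mono_of v"
    using surj_mono_of by (metis surjD)
  then show ?thesis
    using assms nsqrt_add[of u _ v] by (simp add: mono_of_in_rad_monos_iff flip: mono_of_add)
qed

lemma rad_monos_le:
  "w \<in> rad_monos S \<Longrightarrow> (\<And>q. Poly_Mapping.lookup w q \<le> Poly_Mapping.lookup w' q) \<Longrightarrow> w' \<in> rad_monos S"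
  by (metis rad_monos_add poly_mapping_le_imp_add_diff)

lemma rad_monos_root:
  assumes "n > 0" "u \<in> rad_monos S" "\<And>q. Poly_Mapping.lookup u q \<le> n * Poly_Mapping.lookup w q"
  shows "w \<in> rad_monos S"
proof -
  obtain v where w: "w = mono_of v"
    using surj_mono_of by (metis surjD)
  have "Poly_Mapping.lookup u q \<le> Poly_Mapping.lookup (mono_of (\<lambda>i. of_nat n * v i)) q" for q
    using assms(3)[of q] by (simp add: lookup_mono_of_nat_mult w)
  then have "mono_of (\<lambda>i. of_nat n * v i) \<in> rad_monos S"
    using assms(2) rad_monos_le by blast
  then show ?thesis
    using nsqrt_root[OF assms(1)] by (simp add: mono_of_in_rad_monos_iff w)
qed

lemma rad_monos_keys_subset:
  assumes "u \<in> rad_monos S" "Poly_Mapping.keys u \<subseteq> Poly_Mapping.keys w"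
  shows "w \<in> rad_monos S"
proof (rule rad_monos_root)
  show "Suc (\<Sum>q\<in>Poly_Mapping.keys u. Poly_Mapping.lookup u q) > 0" by simp
  fix q
  show "Poly_Mapping.lookup u q \<le> Suc (\<Sum>q\<in>Poly_Mapping.keys u. Poly_Mapping.lookup u q) * Poly_Mapping.lookup w q"
  proof (cases "q \<in> Poly_Mapping.keys u")
    case True
    then have "Poly_Mapping.lookup u q \<le> (\<Sum>q\<in>Poly_Mapping.keys u. Poly_Mapping.lookup u q)"
      by (intro member_le_sum) simp_all
    moreover have "q \<in> Poly_Mapping.keys w"
      using True assms(2) by blast
    then have "Poly_Mapping.lookup w q \<ge> 1"
      by (simp add: in_keys_iff Suc_le_eq)
    ultimately show ?thesis
      by (metis le_SucI mult.right_neutral mult_le_mono2 order_trans)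
  qed (simp add: in_keys_iff)
qed (use assms(1) in simp)

lemma rad_monos_raise_var_Suc:
  assumes "w + Poly_Mapping.single (i, j) c \<in> rad_monos S"
  shows "w + Poly_Mapping.single (i, Suc j) c \<in> rad_monos S"
proof -
  obtain u v where uv: "w = mono_of u" "Poly_Mapping.single (i, j) c = mono_of v"
    using surj_mono_of by (metis surjD)
  have "(\<lambda>l. u l + v l) \<in> nsqrt (angle S)"
    using assms by (simp add: uv mono_of_in_rad_monos_iff flip: mono_of_add)
  then have "(\<lambda>l. u l + [:0, 1:] * v l) \<in> nsqrt (angle S)"
    by (rule nsqrt_nprime[OF brk_angle_subset nprime_angle_subset])
  then have "mono_of (\<lambda>l. u l + [:0, 1:] * v l) \<in> rad_monos S"
    unfolding mono_of_in_rad_monos_iff .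
  then show ?thesis
    unfolding mono_of_add_xmult uv(1) uv(2)[symmetric] shift_mono_single .
qed

lemma rad_monos_raise_var:
  "j \<le> j' \<Longrightarrow> w + Poly_Mapping.single (i, j) c \<in> rad_monos S \<Longrightarrow> w + Poly_Mapping.single (i, j') c \<in> rad_monos S"
  by (induction rule: dec_induct) (simp_all add: rad_monos_raise_var_Suc)

lemma rad_monos_raise_vars:
  assumes "finite F" "\<forall>p\<in>F. snd p \<le> hi (fst p)"
    and "(\<Sum>p\<in>F. Poly_Mapping.single p (c p)) + r \<in> rad_monos S"
  shows "(\<Sum>p\<in>F. Poly_Mapping.single (fst p, hi (fst p)) (c p)) + r \<in> rad_monos S"
  using assms
proof (induction F arbitrary: r rule: finite_induct)
  case (insert p F)
  let ?low = "\<lambda>p. Poly_Mapping.single p (c p)"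
  let ?high = "\<lambda>p. Poly_Mapping.single (fst p, hi (fst p)) (c p)"
  have "sum ?low F + (?low p + r) \<in> rad_monos S"
    using insert.prems(2) insert.hyps by (simp add: add.assoc add.left_commute)
  then have "sum ?high F + (?low p + r) \<in> rad_monos S"
    using insert.IH[of "?low p + r"] insert.prems(1) by simp
  then have "(sum ?high F + r) + Poly_Mapping.single (fst p, snd p) (c p) \<in> rad_monos S"
    by (simp only: prod.collapse add.assoc add.commute[of r])
  moreover have "snd p \<le> hi (fst p)"
    using insert.prems(1) by simp
  ultimately have "(sum ?high F + r) + ?high p \<in> rad_monos S"
    by (rule rad_monos_raise_var[rotated])
  then show ?case
    using insert.hyps by (simp add: ac_simps)
qed simp

text \<open>Raising every variable of \<open>u\<close> to the highest shift of the same \<open>y\<^sub>i\<close> occurring in \<open>w\<close> stays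
  in \<open>rad_monos S\<close> and lands inside the support of \<open>w\<close>.\<close>

lemma rad_monos_dominated:
  assumes u: "u \<in> rad_monos S"
    and dom: "\<And>i j. (i, j) \<in> Poly_Mapping.keys u \<Longrightarrow> \<exists>j'\<ge>j. (i, j') \<in> Poly_Mapping.keys w"
  shows "w \<in> rad_monos S"
proof -
  define hi where "hi i = Max {j. (i, j) \<in> Poly_Mapping.keys w}" for i
  have hi: "snd p \<le> hi (fst p) \<and> (fst p, hi (fst p)) \<in> Poly_Mapping.keys w"
    if p: "p \<in> Poly_Mapping.keys u" for p
  proof -
    obtain j' where j': "snd p \<le> j'" "(fst p, j') \<in> Poly_Mapping.keys w"
      using dom[of "fst p" "snd p"] p by auto
    have fin: "finite {j. (fst p, j) \<in> Poly_Mapping.keys w}"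
      by (rule finite_subset[of _ "snd ` Poly_Mapping.keys w"]) force+
    show ?thesis
      unfolding hi_def using j' Max_ge[OF fin] Max_in[OF fin] by fastforce
  qed
  define u' where "u' = (\<Sum>p\<in>Poly_Mapping.keys u. Poly_Mapping.single (fst p, hi (fst p)) (Poly_Mapping.lookup u p))"
  have "u' + 0 \<in> rad_monos S"
    unfolding u'_def using u hi
    by (intro rad_monos_raise_vars) (simp_all flip: poly_mapping_sum_single)
  moreover have "Poly_Mapping.keys u' \<subseteq> Poly_Mapping.keys w"
    unfolding u'_def using hi by (fastforce dest: subsetD[OF keys_sum] split: if_splits)
  ultimately show ?thesis
    by (simp add: rad_monos_keys_subset)
qed

section \<open>Prime \<open>\<sigma>\<close>-ideals cutting out \<open>k[\<surd>\<langle>S\<rangle>]\<close>\<close>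

definition shift_closed :: "('n \<times> nat) set \<Rightarrow> bool" where
  "shift_closed V \<longleftrightarrow> (\<forall>i j. (i, j) \<in> V \<longrightarrow> (i, Suc j) \<in> V)"

lemma keys_sigmaR: "Poly_Mapping.keys (sigmaR \<sigma> a) \<subseteq> shift_mono ` Poly_Mapping.keys a"
  unfolding sigmaR_def using keys_sum by (fastforce split: if_splits)

lemma sigmaR_in_vars_ideal:
  assumes "shift_closed V" "b \<in> vars_ideal V"
  shows "sigmaR \<sigma> b \<in> vars_ideal V"
  unfolding vars_ideal_def
proof (intro CollectI ballI)
  fix w assume "w \<in> Poly_Mapping.keys (sigmaR \<sigma> b)"
  then obtain m where m: "w = shift_mono m" "m \<in> Poly_Mapping.keys b"
    using keys_sigmaR by blast
  then obtain i j where "(i, j) \<in> Poly_Mapping.keys m" "(i, j) \<in> V"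
    using assms(2) unfolding vars_ideal_def by fastforce
  moreover have "(i, Suc j) \<in> Poly_Mapping.keys w \<longleftrightarrow> (i, j) \<in> Poly_Mapping.keys m"
    by (simp add: m(1) in_keys_iff lookup_shift_mono)
  ultimately show "Poly_Mapping.keys w \<inter> V \<noteq> {}"
    using assms(1) unfolding shift_closed_def by blast
qed

lemma sigma_ideal_vars_ideal:
  "shift_closed V \<Longrightarrow> sigma_ideal \<sigma> (vars_ideal V :: ('n, 'k::field) dpoly set)"
  unfolding sigma_ideal_def is_ideal_def
  by (auto simp: vars_ideal_add vars_ideal_mult sigmaR_in_vars_ideal) (simp add: vars_ideal_def)

lemma well_mixed_vars_ideal:
  assumes "shift_closed V"
  shows "well_mixed \<sigma> (vars_ideal V :: ('n::finite, 'k::field) dpoly set)"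
  unfolding well_mixed_def
proof (intro allI impI)
  fix a b :: "('n, 'k) dpoly"
  assume "a * b \<in> vars_ideal V"
  then consider "a \<in> vars_ideal V" | "b \<in> vars_ideal V"
    using vars_ideal_prime by blast
  then show "a * sigmaR \<sigma> b \<in> vars_ideal V"
  proof cases
    case 1
    then show ?thesis
      by (metis mult.commute vars_ideal_mult)
  next
    case 2
    then show ?thesis
      by (intro vars_ideal_mult sigmaR_in_vars_ideal[OF assms])
  qed
qed

lemma radical_vars_ideal: "radical (vars_ideal V :: ('n::finite, 'k::field) dpoly set)"
  unfolding radical_def using vars_ideal_power by blast

lemma sigma_ideal_Inter: "(\<And>J. J \<in> F \<Longrightarrow> sigma_ideal \<sigma> J) \<Longrightarrow> sigma_ideal \<sigma> (\<Inter>F)"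
  unfolding sigma_ideal_def is_ideal_def by blast

lemma well_mixed_Inter: "(\<And>J. J \<in> F \<Longrightarrow> well_mixed \<sigma> J) \<Longrightarrow> well_mixed \<sigma> (\<Inter>F)"
  unfolding well_mixed_def by blast

lemma radical_Inter: "(\<And>J. J \<in> F \<Longrightarrow> radical J) \<Longrightarrow> radical (\<Inter>F)"
  unfolding radical_def by blast

text \<open>A monomial \<open>w\<close> outside \<open>rad_monos S\<close> is avoided by the shift-closed set of variables lying
  above no variable of \<open>w\<close>: a monomial of \<open>rad_monos S\<close> missing that set would be dominated by \<open>w\<close>.\<close>

lemma kspan_nsqrt_angle_eq_Inter:
  "kspan (nsqrt (angle S)) =
    (\<Inter>V\<in>{V. shift_closed V \<and> (\<forall>u\<in>rad_monos S. Poly_Mapping.keys u \<inter> V \<noteq> {})}. vars_ideal V)"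
  (is "_ = (\<Inter>V\<in>?Vs. _)")
proof (intro equalityI subsetI)
  fix p assume "p \<in> kspan (nsqrt (angle S))"
  then show "p \<in> (\<Inter>V\<in>?Vs. vars_ideal V)"
    unfolding kspan_def rad_monos_def vars_ideal_def by blast
next
  fix p :: "('a, 'b) dpoly" assume p: "p \<in> (\<Inter>V\<in>?Vs. vars_ideal V)"
  have "w \<in> rad_monos S" if w: "w \<in> Poly_Mapping.keys p" for w
  proof (rule ccontr)
    assume "w \<notin> rad_monos S"
    define V where "V = {(i, j). \<forall>j'\<ge>j. (i, j') \<notin> Poly_Mapping.keys w}"
    have "Poly_Mapping.keys u \<inter> V \<noteq> {}" if "u \<in> rad_monos S" for u
      using rad_monos_dominated[OF that] \<open>w \<notin> rad_monos S\<close> unfolding V_def by blast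
    then have "V \<in> ?Vs"
      unfolding shift_closed_def V_def by auto
    then have "Poly_Mapping.keys w \<inter> V \<noteq> {}"
      using p w unfolding vars_ideal_def by blast
    then show False
      unfolding V_def by auto
  qed
  then show "p \<in> kspan (nsqrt (angle S))"
    unfolding kspan_def rad_monos_def by blast
qed

lemma sigma_ideal_kspan_nsqrt_angle:
  "sigma_ideal \<sigma> (kspan (nsqrt (angle S)) :: ('n::finite, 'k::field) dpoly set)"
  unfolding kspan_nsqrt_angle_eq_Inter by (rule sigma_ideal_Inter) (auto intro: sigma_ideal_vars_ideal)

lemma well_mixed_kspan_nsqrt_angle:
  "well_mixed \<sigma> (kspan (nsqrt (angle S)) :: ('n::finite, 'k::field) dpoly set)"
  unfolding kspan_nsqrt_angle_eq_Inter by (rule well_mixed_Inter) (auto intro: well_mixed_vars_ideal)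

lemma radical_kspan_nsqrt_angle:
  "radical (kspan (nsqrt (angle S)) :: ('n::finite, 'k::field) dpoly set)"
  unfolding kspan_nsqrt_angle_eq_Inter by (rule radical_Inter) (auto intro: radical_vars_ideal)

lemma sigmaR_monomial: "\<sigma> 1 = 1 \<Longrightarrow> sigmaR \<sigma> (Poly_Mapping.single m 1) = Poly_Mapping.single (shift_mono m) 1"
  unfolding sigmaR_def by simp

lemma ideal_monomial_le:
  fixes J :: "('n, 'k::field) dpoly set"
  assumes "is_ideal J" "Poly_Mapping.single a 1 \<in> J" "\<And>q. Poly_Mapping.lookup a q \<le> Poly_Mapping.lookup b q"
  shows "Poly_Mapping.single b 1 \<in> J"
proof -
  have "Poly_Mapping.single (b - a) 1 * Poly_Mapping.single a 1 \<in> J"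
    using assms(1,2) unfolding is_ideal_def by blast
  then show ?thesis
    by (simp add: mult_single add.commute flip: poly_mapping_le_imp_add_diff[OF assms(3)])
qed

lemma brk_supp_set_subset:
  fixes J :: "('n::finite, 'k::field) dpoly set"
  assumes "\<sigma> 1 = 1" "sigma_ideal \<sigma> J"
  shows "brk (supp_set J) \<subseteq> supp_set J"
proof
  fix x assume "x \<in> brk (supp_set J)"
  then obtain g u t where x: "x = (\<lambda>i. g * u i + t i)" and u: "u \<in> supp_set J" and g: "g \<noteq> 0"
    unfolding brk_def by blast
  let ?k = "degree g"
  have "Poly_Mapping.single ((shift_mono ^^ k) (mono_of u)) 1 \<in> J" for k
    using u assms(2)
    by (induction k) (simp_all add: supp_set_def sigma_ideal_def flip: sigmaR_monomial[of \<sigma>, OF assms(1)])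
  moreover have "Poly_Mapping.lookup ((shift_mono ^^ ?k) (mono_of u)) q \<le> Poly_Mapping.lookup (mono_of x) q"
    for q
  proof (cases q)
    case (Pair i j)
    show ?thesis
    proof (cases "?k \<le> j")
    case True
    have "coeff g ?k \<ge> 1"
      using leading_coeff_neq_0[OF g] by linarith
    then have "coeff (u i) (j - ?k) \<le> coeff g ?k * coeff (u i) (j - ?k)"
      by simp
    also have "\<dots> \<le> (\<Sum>l\<le>j. coeff g l * coeff (u i) (j - l))"
      by (rule member_le_sum) (use True in auto)
    also have "\<dots> \<le> coeff (x i) j"
      by (simp add: x coeff_mult)
      finally show ?thesis
        using True by (simp add: Pair lookup_shift_mono_funpow lookup_mono_of)
    qed (simp add: Pair lookup_shift_mono_funpow)
  qed
  ultimately have "Poly_Mapping.single (mono_of x) 1 \<in> J"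
    using assms(2) unfolding sigma_ideal_def by (blast intro: ideal_monomial_le)
  then show "x \<in> supp_set J"
    by (simp add: supp_set_def)
qed

lemma nprime_supp_set_subset:
  fixes J :: "('n::finite, 'k::field) dpoly set"
  assumes "\<sigma> 1 = 1" "well_mixed \<sigma> J"
  shows "nprime (supp_set J) \<subseteq> supp_set J"
proof
  fix x assume "x \<in> nprime (supp_set J)"
  then obtain u v where x: "x = (\<lambda>i. u i + [:0, 1:] * v i)" and uv: "(\<lambda>i. u i + v i) \<in> supp_set J"
    unfolding nprime_def by blast
  have "Poly_Mapping.single (mono_of u) 1 * Poly_Mapping.single (mono_of v) 1 \<in> J"
    using uv by (simp add: supp_set_def mono_of_add mult_single)
  then have "Poly_Mapping.single (mono_of u) 1 * sigmaR \<sigma> (Poly_Mapping.single (mono_of v) 1) \<in> J"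
    using assms(2) unfolding well_mixed_def by blast
  moreover have "mono_of x = mono_of u + shift_mono (mono_of v)"
    unfolding x by (rule mono_of_add_xmult)
  ultimately show "x \<in> supp_set J"
    by (simp add: supp_set_def sigmaR_monomial[of \<sigma>, OF assms(1)] mult_single)
qed

lemma supp_set_root:
  fixes J :: "('n::finite, 'k::field) dpoly set"
  assumes "radical J" "m > 0" "(\<lambda>i. of_nat m * u i) \<in> supp_set J"
  shows "u \<in> supp_set J"
proof -
  have "mono_of (\<lambda>i. of_nat m * u i) = (\<Sum>k<m. mono_of u)"
    by (rule poly_mapping_eqI) (simp add: lookup_mono_of_nat_mult lookup_sum)
  then have "Poly_Mapping.single (mono_of u) 1 ^ m \<in> J"
    using assms(3) by (simp add: supp_set_def single_one_power)
  then show ?thesis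
    using assms(1,2) unfolding radical_def supp_set_def by blast
qed

lemma ideal_sum: "is_ideal J \<Longrightarrow> (\<And>x. x \<in> A \<Longrightarrow> f x \<in> J) \<Longrightarrow> sum f A \<in> J"
  by (induction A rule: infinite_finite_induct) (auto simp: is_ideal_def)

lemma kspan_subset_ideal:
  fixes J :: "('n::finite, 'k::field) dpoly set"
  assumes "is_ideal J" "T \<subseteq> supp_set J"
  shows "kspan T \<subseteq> J"
proof
  fix p :: "('n, 'k) dpoly" assume p: "p \<in> kspan T"
  have "Poly_Mapping.single w (Poly_Mapping.lookup p w) \<in> J" if "w \<in> Poly_Mapping.keys p" for w
  proof -
    have "Poly_Mapping.single w 1 \<in> J"
      using p that assms(2) unfolding kspan_def supp_set_def by blast
    then have "Poly_Mapping.single 0 (Poly_Mapping.lookup p w) * Poly_Mapping.single w 1 \<in> J"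
      using assms(1) unfolding is_ideal_def by blast
    then show ?thesis
      by (simp add: mult_single)
  qed
  then have "(\<Sum>w\<in>Poly_Mapping.keys p. Poly_Mapping.single w (Poly_Mapping.lookup p w)) \<in> J"
    using assms(1) by (intro ideal_sum)
  then show "p \<in> J"
    by (simp flip: poly_mapping_sum_single)
qed

lemma kspan_nsqrt_angle_subset:
  fixes J :: "('n::finite, 'k::field) dpoly set"
  assumes "\<sigma> 1 = 1" "sigma_ideal \<sigma> J" "well_mixed \<sigma> J" "radical J" "S \<subseteq> supp_set J"
  shows "kspan (nsqrt (angle S)) \<subseteq> J"
proof (rule kspan_subset_ideal)
  show "is_ideal J"
    using assms(2) by (simp add: sigma_ideal_def)
  have "angle S \<subseteq> supp_set J"
    using assms by (intro angle_least brk_supp_set_subset nprime_supp_set_subset)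
  then have "nsqrt (angle S) \<subseteq> nsqrt (supp_set J)"
    by (rule nsqrt_mono)
  also have "\<dots> \<subseteq> supp_set J"
    by (rule nsqrt_least[OF brk_supp_set_subset[OF assms(1,2)] supp_set_root[OF assms(4)]])
  finally show "nsqrt (angle S) \<subseteq> supp_set J" .
qed

lemma monomial_ideal_subset:
  assumes "monomial_ideal I" "is_ideal K" "\<And>m. Poly_Mapping.single m 1 \<in> I \<Longrightarrow> Poly_Mapping.single m 1 \<in> K"
  shows "I \<subseteq> K"
proof -
  obtain M where M: "I = ideal_gen ((\<lambda>m. Poly_Mapping.single m 1) ` M)"
    using assms(1) unfolding monomial_ideal_def by blast
  then have "(\<lambda>m. Poly_Mapping.single m 1) ` M \<subseteq> K"
    using assms(3) unfolding ideal_gen_def by blast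
  then show ?thesis
    using assms(2) unfolding M ideal_gen_def by blast
qed

lemma monomial_ideal_subset_kspan:
  fixes I :: "('n::finite, 'k::field) dpoly set"
  assumes "monomial_ideal I"
  shows "I \<subseteq> kspan (nsqrt (angle (supp_set I)))"
proof (rule monomial_ideal_subset[OF assms])
  show "is_ideal (kspan (nsqrt (angle (supp_set I))) :: ('n, 'k) dpoly set)"
    using sigma_ideal_kspan_nsqrt_angle sigma_ideal_def by blast
  fix m assume "Poly_Mapping.single m 1 \<in> I"
  moreover obtain u where m: "m = mono_of u"
    using surj_mono_of by (metis surjD)
  ultimately have "u \<in> nsqrt (angle (supp_set I))"
    using subset_angle subset_nsqrt by (fastforce simp: supp_set_def)
  then show "Poly_Mapping.single m 1 \<in> kspan (nsqrt (angle (supp_set I)))"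
    by (simp add: kspan_def m)
qed

theorem corollary5p11:
  fixes \<sigma> :: "'k::field_char_0 \<Rightarrow> 'k"
    and I :: "('n::finite, 'k) dpoly set"
  assumes "ring_endo \<sigma>"
    and "sigma_ideal \<sigma> I"
    and "monomial_ideal I"
  shows "rwm_closure \<sigma> I = kspan (nsqrt (angle (supp_set I)))"
proof
  show "rwm_closure \<sigma> I \<subseteq> kspan (nsqrt (angle (supp_set I)))"
    unfolding rwm_closure_def
    using sigma_ideal_kspan_nsqrt_angle well_mixed_kspan_nsqrt_angle radical_kspan_nsqrt_angle
      monomial_ideal_subset_kspan[OF assms(3)] by blast
  have "\<sigma> 1 = 1"
    using assms(1) unfolding ring_endo_def by blast
  show "kspan (nsqrt (angle (supp_set I))) \<subseteq> rwm_closure \<sigma> I"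
    unfolding rwm_closure_def
  proof (rule Inter_greatest)
    fix J assume "J \<in> {J. sigma_ideal \<sigma> J \<and> well_mixed \<sigma> J \<and> radical J \<and> I \<subseteq> J}"
    with \<open>\<sigma> 1 = 1\<close> show "kspan (nsqrt (angle (supp_set I))) \<subseteq> J"
      by (intro kspan_nsqrt_angle_subset[of \<sigma>]) (auto simp: supp_set_def)
  qed
qed

end
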